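(* Let $\omega\in\Omega$ be a path and $I$ a closed interval with $I\subseteq(0,1)$. If $\omega$ is wCH-random for $I$, then $\omega$ is not recursive. The same conclusion holds if $\omega$ is $\mathscr S$-random for $I$ for some countable set $\mathscr S$ of selection processes containing all recursive temporal selection processes, or if $\omega$ is $R$-random for $I$ for some $R\in\{\mathrm{ML},\mathrm{wML},\mathrm{C},\mathrm{S}\}$.
   Context: Notation: $\mathbb N=\{1,2,\dots\}$, $\mathbb N_0=\mathbb N\cup\{0\}$. $\Omega=\{0,1\}^{\mathbb N}$ is the set of paths $\omega=(\omega_1,\omega_2,\dots)$; $\omega_{1:n}=(\omega_1,\dots,\omega_n)$, $\omega_{1:0}=\square$. $\mathbb S=\bigcup_{n\in\mathbb N_0}\{0,1\}^n$ is the set of situations, $|s|$ the length, $sx$ concatenation. For $r\in[0,1]$, $f:\{0,1\}\to\mathbb R$: $E_r(f)=rf(1)+(1-r)f(0)$; $\overline E_I(f)=\max_{r\in I}E_r(f)$. A forecasting system is a map $\varphi$ from $\mathbb S$ to closed subintervals of $[0,1]$, with $\underline\varphi(s)=\min\varphi(s)$, $\overline\varphi(s)=\max\varphi(s)$; being random for an interval $I$ means being random for the constant forecasting system with value $I$. Computability: a map from a countable effectively encoded domain ($\mathbb N$, $\mathbb N_0$, $\mathbb S$, products with $\{0,1\}$ and $\mathbb N_0$) to $\mathbb N_0$ or $\mathbb Q$ or $\{0,1\}$ is recursive if Turing-computable; a path is recursive if $n\mapsto\omega_n$ is recursive. A real map $r$ is lower semicomputable if $r(d)=\lim_nq(d,n)$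 for a recursive rational $q$ non-decreasing in $n$, computable if $|r(d)-q(d,n)|<2^{-n}$ for a recursive rational $q$. Selection processes: maps $S:\mathbb S\to\{0,1\}$; temporal if $S(s)$ depends only on $|s|$ (written $S(n)$). For a countable set $\mathscr S$ of selection processes, $\omega$ is $\mathscr S$-random for $\varphi$ if for every $S\in\mathscr S$ with $\lim_n\sum_{k=0}^{n-1}S(\omega_{1:k})=\infty$: $\liminf_n\frac{\sum_{k=0}^{n-1}S(\omega_{1:k})[\omega_{k+1}-\underline\varphi(\omega_{1:k})]}{\sum_{k=0}^{n-1}S(\omega_{1:k})}\ge0$ and $\limsup_n\frac{\sum_{k=0}^{n-1}S(\omega_{1:k})[\omega_{k+1}-\overline\varphi(\omega_{1:k})]}{\sum_{k=0}^{n-1}S(\omega_{1:k})}\le0$. $\omega$ is wCH-random for $\varphi$ if it is $\mathscr S$-random for $\varphi$ with $\mathscr S$ the set of all recursive temporal selection processes. Martingale-theoretic randomness: a real process is $F:\mathbb S\to\mathbb R$, $\Delta F(s)$ is $x\mapsto F(sx)-F(s)$; $M$ is a supermartingale for $\varphi$ if $\overline E_{\varphi(s)}(\Delta M(s))\le0$ for all $s$. A test process is a non-negative real process with $F(\square)=1$; a test supermartingale for $\varphi$ is a test process that is a supermartingale for $\varphi$. A multiplier process $D$ assigns to each $s$ a function $D(s):\{0,1\}\to[0,\infty)$ and generates the test process $F(\square)=1$, $F(sx)=F(s)D(s)(x)$. $\mathscr F_{\mathrm{ML}}$: lower semicomputable test processes; $\mathscr F_{\mathrm{wML}}$: test processes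 generated by lower semicomputable multiplier processes; $\mathscr F_{\mathrm C}=\mathscr F_{\mathrm S}$: positive rational-valued recursive test processes. $\overline{\mathbb T}_R(\varphi)$: elements of $\mathscr F_R$ that are test supermartingales for $\varphi$. For $R\in\{\mathrm{ML},\mathrm{wML},\mathrm C\}$, $\omega$ is $R$-random for $\varphi$ if no $T\in\overline{\mathbb T}_R(\varphi)$ has $\limsup_nT(\omega_{1:n})=\infty$. A real growth function is a computable, non-decreasing, unbounded $\tau:\mathbb N_0\to[0,\infty)$; $\omega$ is S-random for $\varphi$ if there are no $T\in\overline{\mathbb T}_{\mathrm S}(\varphi)$ and real growth function $\tau$ with $\limsup_n[T(\omega_{1:n})-\tau(n)]\ge0$. *)

theory Defs
  imports "HOL-Analysis.Analysis" "HOL-Library.Nat_Bijection"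
begin

datatype rf = Zero | Succ | Proj nat | Comp rf "rf list" | Prim rf rf | Mn rf

inductive rf_eval :: "rf \<Rightarrow> nat list \<Rightarrow> nat \<Rightarrow> bool" where
  zero: "rf_eval Zero xs 0"
| succ: "rf_eval Succ (x # xs) (Suc x)"
| proj: "i < length xs \<Longrightarrow> rf_eval (Proj i) xs (xs ! i)"
| comp: "length ys = length gs \<Longrightarrow> (\<forall>i<length gs. rf_eval (gs ! i) xs (ys ! i))
          \<Longrightarrow> rf_eval f ys z \<Longrightarrow> rf_eval (Comp f gs) xs z"
| prim0: "rf_eval g xs z \<Longrightarrow> rf_eval (Prim g h) (0 # xs) z"
| primS: "rf_eval (Prim g h) (n # xs) y \<Longrightarrow> rf_eval h (y # n # xs) z
          \<Longrightarrow> rf_eval (Prim g h) (Suc n # xs) z"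
| mn: "rf_eval f (n # xs) 0 \<Longrightarrow> (\<forall>m<n. \<exists>y. y > 0 \<and> rf_eval f (m # xs) y)
          \<Longrightarrow> rf_eval (Mn f) xs n"

text \<open>A map nat to nat is recursive (Turing-computable) iff it is a total mu-recursive function.\<close>
definition recursive_nat :: "(nat \<Rightarrow> nat) \<Rightarrow> bool" where
  "recursive_nat f \<longleftrightarrow> (\<exists>p. \<forall>n. rf_eval p [n] (f n))"

definition enc_bool :: "bool \<Rightarrow> nat" where "enc_bool b = (if b then 1 else 0)"
definition enc_sit :: "bool list \<Rightarrow> nat" where "enc_sit s = list_encode (map enc_bool s)"
definition enc_rat :: "rat \<Rightarrow> nat" where
  "enc_rat q = prod_encode (int_encode (fst (quotient_of q)), int_encode (snd (quotient_of q)))"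

definition recursive_map :: "('a \<Rightarrow> nat) \<Rightarrow> ('b \<Rightarrow> nat) \<Rightarrow> ('a \<Rightarrow> 'b) \<Rightarrow> bool" where
  "recursive_map encA encB f \<longleftrightarrow> (\<exists>g. recursive_nat g \<and> (\<forall>x. g (encA x) = encB (f x)))"

definition enc_sit_nat :: "bool list \<times> nat \<Rightarrow> nat" where
  "enc_sit_nat p = prod_encode (enc_sit (fst p), snd p)"
definition enc_sit_bool_nat :: "(bool list \<times> bool) \<times> nat \<Rightarrow> nat" where
  "enc_sit_bool_nat p = prod_encode (prod_encode (enc_sit (fst (fst p)), enc_bool (snd (fst p))), snd p)"
definition enc_nat_nat :: "nat \<times> nat \<Rightarrow> nat" where
  "enc_nat_nat p = prod_encode p"

text \<open>A path \<omega> is represented as \<open>nat \<Rightarrow> bool\<close> with \<open>\<omega> k\<close> the (k+1)-th outcome; a situation is a \<open>bool list\<close>.\<close>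
definition prefix :: "(nat \<Rightarrow> bool) \<Rightarrow> nat \<Rightarrow> bool list" where
  "prefix \<omega> n = map \<omega> [0..<n]"

definition recursive_path :: "(nat \<Rightarrow> bool) \<Rightarrow> bool" where
  "recursive_path \<omega> \<longleftrightarrow> recursive_map id enc_bool \<omega>"

definition forecasting_system :: "(bool list \<Rightarrow> real set) \<Rightarrow> bool" where
  "forecasting_system \<phi> \<longleftrightarrow> (\<forall>s. \<exists>l u. 0 \<le> l \<and> l \<le> u \<and> u \<le> 1 \<and> \<phi> s = {l..u})"

definition ev :: "real \<Rightarrow> (bool \<Rightarrow> real) \<Rightarrow> real" where
  "ev r f = r * f True + (1 - r) * f False"

definition upper_ev :: "real set \<Rightarrow> (bool \<Rightarrow> real) \<Rightarrow> real" where
  "upper_ev I f = Sup ((\<lambda>r. ev r f) ` I)"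

definition temporal :: "(bool list \<Rightarrow> bool) \<Rightarrow> bool" where
  "temporal S \<longleftrightarrow> (\<forall>s t. length s = length t \<longrightarrow> S s = S t)"

definition recursive_temporal_sel :: "(bool list \<Rightarrow> bool) set" where
  "recursive_temporal_sel = {S. temporal S \<and> recursive_map enc_sit enc_bool S}"

definition sel_count :: "(bool list \<Rightarrow> bool) \<Rightarrow> (nat \<Rightarrow> bool) \<Rightarrow> nat \<Rightarrow> nat" where
  "sel_count S \<omega> n = (\<Sum>k<n. enc_bool (S (prefix \<omega> k)))"

definition sel_random ::
  "(bool list \<Rightarrow> bool) set \<Rightarrow> (bool list \<Rightarrow> real set) \<Rightarrow> (nat \<Rightarrow> bool) \<Rightarrow> bool" where
  "sel_random SS \<phi> \<omega> \<longleftrightarrow> (\<forall>S\<in>SS. filterlim (sel_count S \<omega>) at_top sequentially \<longrightarrow>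
      (liminf (\<lambda>n. ereal ((\<Sum>k<n. real (enc_bool (S (prefix \<omega> k)))
            * (real (enc_bool (\<omega> k)) - Inf (\<phi> (prefix \<omega> k)))) / real (sel_count S \<omega> n))) \<ge> 0
     \<and> limsup (\<lambda>n. ereal ((\<Sum>k<n. real (enc_bool (S (prefix \<omega> k)))
            * (real (enc_bool (\<omega> k)) - Sup (\<phi> (prefix \<omega> k)))) / real (sel_count S \<omega> n))) \<le> 0))"

definition wCH_random :: "(bool list \<Rightarrow> real set) \<Rightarrow> (nat \<Rightarrow> bool) \<Rightarrow> bool" where
  "wCH_random \<phi> \<omega> \<longleftrightarrow> sel_random recursive_temporal_sel \<phi> \<omega>"

definition supermartingale :: "(bool list \<Rightarrow> real set) \<Rightarrow> (bool list \<Rightarrow> real) \<Rightarrow> bool" where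
  "supermartingale \<phi> M \<longleftrightarrow> (\<forall>s. upper_ev (\<phi> s) (\<lambda>x. M (s @ [x]) - M s) \<le> 0)"

definition test_process :: "(bool list \<Rightarrow> real) \<Rightarrow> bool" where
  "test_process F \<longleftrightarrow> (\<forall>s. F s \<ge> 0) \<and> F [] = 1"

text \<open>Test process generated by a multiplier process: F([])=1, F(sx)=F(s) D(s)(x).\<close>
definition generated :: "(bool list \<Rightarrow> bool \<Rightarrow> real) \<Rightarrow> bool list \<Rightarrow> real" where
  "generated D s = (\<Prod>k<length s. D (take k s) (s ! k))"

definition lower_semicomputable_sit :: "(bool list \<Rightarrow> real) \<Rightarrow> bool" where
  "lower_semicomputable_sit F \<longleftrightarrow> (\<exists>q :: bool list \<Rightarrow> nat \<Rightarrow> rat.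
      recursive_map enc_sit_nat enc_rat (\<lambda>(s, n). q s n) \<and>
      (\<forall>s n. q s n \<le> q s (Suc n)) \<and> (\<forall>s. (\<lambda>n. real_of_rat (q s n)) \<longlonglongrightarrow> F s))"

definition lower_semicomputable_mult :: "(bool list \<Rightarrow> bool \<Rightarrow> real) \<Rightarrow> bool" where
  "lower_semicomputable_mult D \<longleftrightarrow> (\<exists>q :: bool list \<Rightarrow> bool \<Rightarrow> nat \<Rightarrow> rat.
      recursive_map enc_sit_bool_nat enc_rat (\<lambda>((s, x), n). q s x n) \<and>
      (\<forall>s x n. q s x n \<le> q s x (Suc n)) \<and> (\<forall>s x. (\<lambda>n. real_of_rat (q s x n)) \<longlonglongrightarrow> D s x))"

definition F_ML :: "(bool list \<Rightarrow> real) set" where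
  "F_ML = {F. test_process F \<and> lower_semicomputable_sit F}"

definition F_wML :: "(bool list \<Rightarrow> real) set" where
  "F_wML = {F. \<exists>D. (\<forall>s x. D s x \<ge> 0) \<and> lower_semicomputable_mult D \<and> F = generated D}"

definition F_C :: "(bool list \<Rightarrow> real) set" where
  "F_C = {F. test_process F \<and> (\<exists>f :: bool list \<Rightarrow> rat. recursive_map enc_sit enc_rat f \<and>
             (\<forall>s. f s > 0) \<and> (\<forall>s. F s = real_of_rat (f s)))}"

definition F_S :: "(bool list \<Rightarrow> real) set" where
  "F_S = F_C"

definition test_supermartingales :: "(bool list \<Rightarrow> real) set \<Rightarrow> (bool list \<Rightarrow> real set) \<Rightarrow> (bool list \<Rightarrow> real) set" where
  "test_supermartingales FR \<phi> = {T \<in> FR. test_process T \<and> supermartingale \<phi> T}"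

definition mart_random :: "(bool list \<Rightarrow> real) set \<Rightarrow> (bool list \<Rightarrow> real set) \<Rightarrow> (nat \<Rightarrow> bool) \<Rightarrow> bool" where
  "mart_random FR \<phi> \<omega> \<longleftrightarrow>
     \<not> (\<exists>T \<in> test_supermartingales FR \<phi>. limsup (\<lambda>n. ereal (T (prefix \<omega> n))) = \<infinity>)"

definition random_ML where "random_ML = mart_random F_ML"
definition random_wML where "random_wML = mart_random F_wML"
definition random_C where "random_C = mart_random F_C"

definition computable_real_fun :: "(nat \<Rightarrow> real) \<Rightarrow> bool" where
  "computable_real_fun r \<longleftrightarrow> (\<exists>q :: nat \<Rightarrow> nat \<Rightarrow> rat.
      recursive_map enc_nat_nat enc_rat (\<lambda>(d, n). q d n) \<and>
      (\<forall>d n. \<bar>r d - real_of_rat (q d n)\<bar> < 1 / 2 ^ n))"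

definition real_growth_function :: "(nat \<Rightarrow> real) \<Rightarrow> bool" where
  "real_growth_function \<tau> \<longleftrightarrow> computable_real_fun \<tau> \<and> (\<forall>n. \<tau> n \<ge> 0) \<and> mono \<tau> \<and>
      (\<forall>M. \<exists>n. \<tau> n > M)"

definition random_S :: "(bool list \<Rightarrow> real set) \<Rightarrow> (nat \<Rightarrow> bool) \<Rightarrow> bool" where
  "random_S \<phi> \<omega> \<longleftrightarrow> \<not> (\<exists>T \<in> test_supermartingales F_S \<phi>. \<exists>\<tau>. real_growth_function \<tau> \<and>
      limsup (\<lambda>n. ereal (T (prefix \<omega> n) - \<tau> n)) \<ge> 0)"

end

theory Submission
  imports Defs "HOL-Real_Asymp.Real_Asymp"
begin

(* A recursive path is predictable, and a forecaster whose intervals stay inside [e, 1 - e]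
   can be beaten by anyone who can compute the path.

   Selection: one of the outcomes 1 and 0 occurs infinitely often along the path.  The temporal
   rule selecting exactly the times at which the path shows that outcome is recursive, and the
   relative frequency along it is 1 > b, resp. 0 < a.

   Martingales: with 1/N <= e, multiply the capital by (N + 1)/N when the next outcome is the
   one predicted by the path and by 1/N otherwise.  Against any forecast r in [1/N, 1 - 1/N]
   the expected multiplier is at most 1, so this is a test supermartingale; it is
   rational-valued and computable from the path, and along the path it equals ((N + 1)/N)^n,
   which eventually exceeds the growth function n. *)

section \<open>Computable functions of a fixed arity\<close>

definition computable :: "nat \<Rightarrow> (nat list \<Rightarrow> nat) \<Rightarrow> bool" where
  "computable k f \<longleftrightarrow> (\<exists>p. \<forall>xs. length xs = k \<longrightarrow> rf_eval p xs (f xs))"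

lemma computable_cong:
  "computable k f \<Longrightarrow> (\<And>xs. length xs = k \<Longrightarrow> f xs = g xs) \<Longrightarrow> computable k g"
  unfolding computable_def by metis

lemma computable_proj: "i < k \<Longrightarrow> computable k (\<lambda>xs. xs ! i)"
  unfolding computable_def by (auto intro: rf_eval.proj)

lemma computable_compose:
  assumes "computable (length gs) f" and "\<forall>g\<in>set gs. computable k g"
  shows "computable k (\<lambda>xs. f (map (\<lambda>g. g xs) gs))"
proof -
  obtain pf where pf: "\<forall>ys. length ys = length gs \<longrightarrow> rf_eval pf ys (f ys)"
    using assms(1) unfolding computable_def by blast
  obtain P where P: "\<forall>g\<in>set gs. \<forall>xs. length xs = k \<longrightarrow> rf_eval (P g) xs (g xs)"
    using bchoice[OF assms(2)[unfolded computable_def]] by blast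
  have "rf_eval (Comp pf (map P gs)) xs (f (map (\<lambda>g. g xs) gs))" if "length xs = k" for xs
    by (rule rf_eval.comp[where ys = "map (\<lambda>g. g xs) gs"]) (use pf P that in auto)
  then show ?thesis
    unfolding computable_def by blast
qed

lemma computable_compose1:
  "computable 1 (\<lambda>ys. F (ys ! 0)) \<Longrightarrow> computable k f \<Longrightarrow> computable k (\<lambda>xs. F (f xs))"
  using computable_compose[of "[f]" "\<lambda>ys. F (ys ! 0)" k] by simp

lemma computable_compose2:
  "computable 2 (\<lambda>ys. F (ys ! 0) (ys ! 1)) \<Longrightarrow> computable k f \<Longrightarrow> computable k g
    \<Longrightarrow> computable k (\<lambda>xs. F (f xs) (g xs))"
  using computable_compose[of "[f, g]" "\<lambda>ys. F (ys ! 0) (ys ! 1)" k] by (simp add: numeral_2_eq_2)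

lemma computable_cons:
  assumes "computable (Suc k) f" and "computable k b"
  shows "computable k (\<lambda>xs. f (b xs # xs))"
proof -
  have "computable k (\<lambda>xs. f (map (\<lambda>g. g xs) (b # map (\<lambda>i ys. ys ! i) [0..<k])))"
    using assms by (intro computable_compose) (auto intro: computable_proj)
  then show ?thesis
    by (rule computable_cong) (simp add: comp_def, metis map_nth)
qed

lemma computable_tl:
  assumes "computable k f"
  shows "computable (Suc k) (\<lambda>xs. f (tl xs))"
proof -
  have "computable (Suc k) (\<lambda>xs. f (map (\<lambda>g. g xs) (map (\<lambda>i ys. ys ! Suc i) [0..<k])))"
    using assms by (intro computable_compose) (auto intro: computable_proj)
  then show ?thesis
    by (rule computable_cong)
      (auto simp: o_def list_eq_iff_nth_eq nth_tl intro!: arg_cong[where f = f])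
qed

lemma computable_prim_rec:
  assumes "computable k g" and "computable (Suc (Suc k)) h"
    and F_0: "\<And>xs. length xs = k \<Longrightarrow> F (0 # xs) = g xs"
    and F_Suc: "\<And>n xs. length xs = k \<Longrightarrow> F (Suc n # xs) = h (F (n # xs) # n # xs)"
  shows "computable (Suc k) F"
proof -
  obtain pg where pg: "\<forall>xs. length xs = k \<longrightarrow> rf_eval pg xs (g xs)"
    using assms(1) unfolding computable_def by blast
  obtain ph where ph: "\<forall>xs. length xs = Suc (Suc k) \<longrightarrow> rf_eval ph xs (h xs)"
    using assms(2) unfolding computable_def by blast
  have "rf_eval (Prim pg ph) (n # xs) (F (n # xs))" if "length xs = k" for n xs
    by (induction n) (use pg ph that in \<open>auto simp: F_0 F_Suc intro: rf_eval.prim0 rf_eval.primS\<close>)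
  then show ?thesis
    unfolding computable_def by (metis length_Suc_conv)
qed

lemma computable_Suc: "computable k f \<Longrightarrow> computable k (\<lambda>xs. Suc (f xs))"
  by (rule computable_compose1[where F = Suc])
    (auto simp: computable_def length_Suc_conv intro!: exI[of _ Succ] rf_eval.succ)

lemma computable_const: "computable k (\<lambda>_. c)"
proof (induction c)
  case 0
  show ?case
    unfolding computable_def by (auto intro: rf_eval.zero)
next
  case (Suc c)
  show ?case
    using computable_Suc[OF Suc.IH] .
qed

lemma computable_add: "computable k f \<Longrightarrow> computable k g \<Longrightarrow> computable k (\<lambda>xs. f xs + g xs)"
proof (rule computable_compose2[where F = "(+)"])
  have "computable (Suc (Suc 0)) (\<lambda>ys. ys ! 0 + ys ! 1)"
    by (rule computable_prim_rec[OF computable_proj computable_Suc[OF computable_proj]]) auto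
  then show "computable 2 (\<lambda>ys. ys ! 0 + ys ! 1)"
    by (simp add: numeral_2_eq_2)
qed

lemma computable_mult: "computable k f \<Longrightarrow> computable k g \<Longrightarrow> computable k (\<lambda>xs. f xs * g xs)"
proof (rule computable_compose2[where F = "(*)"])
  have "computable (Suc (Suc 0)) (\<lambda>ys. ys ! 0 * ys ! 1)"
    by (rule computable_prim_rec[OF computable_const
          computable_add[OF computable_proj computable_proj, of 0 _ 2]]) auto
  then show "computable 2 (\<lambda>ys. ys ! 0 * ys ! 1)"
    by (simp add: numeral_2_eq_2)
qed

lemma computable_funpow:
  assumes "computable 1 (\<lambda>ys. t (ys ! 0))" and "computable k b" and "computable k x"
  shows "computable k (\<lambda>xs. (t ^^ b xs) (x xs))"
proof -
  have "computable (Suc k) (\<lambda>xs. (t ^^ hd xs) (x (tl xs)))"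
    by (rule computable_prim_rec[OF assms(3) computable_compose1[OF assms(1) computable_proj]]) auto
  from computable_cons[OF this assms(2)] show ?thesis
    by simp
qed

lemma computable_diff:
  assumes "computable k f" and "computable k g"
  shows "computable k (\<lambda>xs. f xs - g xs)"
proof -
  have "computable (Suc 0) (\<lambda>ys. ys ! 0 - 1)"
    by (rule computable_prim_rec[OF computable_const computable_proj[of 1]]) auto
  then have "computable k (\<lambda>xs. ((\<lambda>z. z - 1) ^^ g xs) (f xs))"
    using assms by (intro computable_funpow) auto
  moreover have "((\<lambda>z. z - 1) ^^ m) n = n - m" for m n :: nat
    by (induction m) auto
  ultimately show ?thesis
    by simp
qed

lemma computable_sum:
  assumes "computable (Suc k) g" and "computable k b"
  shows "computable k (\<lambda>xs. \<Sum>i<b xs. g (i # xs))"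
proof -
  have "computable (Suc (Suc k)) (\<lambda>ys. ys ! 0 + g (tl ys))"
    by (intro computable_add computable_proj computable_tl assms(1)) simp
  then have "computable (Suc k) (\<lambda>xs. \<Sum>i<hd xs. g (i # tl xs))"
    by (rule computable_prim_rec[OF computable_const]) auto
  from computable_cons[OF this assms(2)] show ?thesis
    by simp
qed

lemma computable_if_eq:
  assumes "computable k f" "computable k g" "computable k h1" "computable k h2"
  shows "computable k (\<lambda>xs. if f xs = g xs then h1 xs else h2 xs)"
proof -
  \<comment> \<open>in truncated arithmetic, \<open>(f - g) + (g - f)\<close> vanishes exactly when \<open>f = g\<close>\<close>
  let ?ne = "\<lambda>xs. 1 - (1 - ((f xs - g xs) + (g xs - f xs)))"
  have "computable k (\<lambda>xs. (1 - ?ne xs) * h1 xs + ?ne xs * h2 xs)"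
    by (intro computable_add computable_mult computable_diff computable_const assms)
  then show ?thesis
    by (rule computable_cong) auto
qed

lemma computable_triangle: "computable k f \<Longrightarrow> computable k (\<lambda>xs. triangle (f xs))"
proof (rule computable_compose1[where F = triangle])
  have "computable (Suc (Suc 0)) (\<lambda>ys. ys ! 0 + Suc (ys ! 1))"
    by (intro computable_add computable_Suc computable_proj) auto
  then have "computable (Suc 0) (\<lambda>ys. triangle (ys ! 0))"
    by (rule computable_prim_rec[OF computable_const]) simp_all
  then show "computable 1 (\<lambda>ys. triangle (ys ! 0))"
    by simp
qed

lemma computable_prod_encode:
  "computable k f \<Longrightarrow> computable k g \<Longrightarrow> computable k (\<lambda>xs. prod_encode (f xs, g xs))"
  unfolding prod_encode_def prod.case by (intro computable_add computable_triangle) simp_all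

lemma computable_power:
  assumes "computable k f"
  shows "computable k (\<lambda>xs. c ^ f xs)"
proof -
  have "computable 1 (\<lambda>ys. ys ! 0 * c)"
    by (intro computable_mult computable_proj computable_const) simp
  then have "computable k (\<lambda>xs. ((\<lambda>z. z * c) ^^ f xs) 1)"
    using assms by (intro computable_funpow computable_const)
  moreover have "((\<lambda>z. z * c) ^^ n) 1 = c ^ n" for n
    by (induction n) auto
  ultimately show ?thesis
    by simp
qed

text \<open>Decoding by bounded search: both components of a pair are bounded by its code.\<close>

lemma sum_prod_encode_eq_case_prod_decode:
  "(\<Sum>x<Suc m. \<Sum>y<Suc m. if prod_encode (x, y) = m then g x y else 0)
    = case_prod g (prod_decode m)"
proof -
  obtain a b where ab: "prod_decode m = (a, b)"
    by fastforce
  then have m: "m = prod_encode (a, b)"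
    by (metis prod_decode_inverse)
  then have "a < Suc m" "b < Suc m"
    using le_prod_encode_1 le_prod_encode_2 by (auto simp: less_Suc_eq_le)
  moreover have "(if prod_encode (x, y) = m then g x y else 0)
      = (if y = b then if x = a then g a b else 0 else 0)" for x y
    using m prod_encode_eq by auto
  ultimately show ?thesis
    using ab by (simp del: sum.lessThan_Suc)
qed

lemma computable_case_prod_decode:
  assumes g: "computable 2 (\<lambda>ys. g (ys ! 0) (ys ! 1))" and f: "computable k f"
  shows "computable k (\<lambda>xs. case_prod g (prod_decode (f xs)))"
proof (rule computable_compose1[OF _ f])
  have inner: "computable (Suc (Suc (Suc 0)))
      (\<lambda>zs. if prod_encode (zs ! 1, zs ! 0) = zs ! 2 then g (zs ! 1) (zs ! 0) else 0)"
    by (intro computable_if_eq computable_prod_encode computable_compose2[OF g] computable_proj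
        computable_const) auto
  have middle: "computable (Suc (Suc 0))
      (\<lambda>ys. \<Sum>y<Suc (ys ! 1). if prod_encode (ys ! 0, y) = ys ! 1 then g (ys ! 0) y else 0)"
    by (rule computable_cong[OF computable_sum[OF inner, of "\<lambda>ys. Suc (ys ! 1)"]])
      (auto intro: computable_Suc computable_proj cong: if_cong)
  have "computable (Suc 0)
      (\<lambda>ys. \<Sum>x<Suc (ys ! 0). \<Sum>y<Suc (ys ! 0). if prod_encode (x, y) = ys ! 0 then g x y else 0)"
    by (rule computable_cong[OF computable_sum[OF middle, of "\<lambda>ys. Suc (ys ! 0)"]])
      (auto intro: computable_Suc computable_proj cong: if_cong)
  then show "computable 1 (\<lambda>ys. case_prod g (prod_decode (ys ! 0)))"
    by (simp only: sum_prod_encode_eq_case_prod_decode One_nat_def)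
qed

lemma computable_fst_prod_decode: "computable k f \<Longrightarrow> computable k (\<lambda>xs. fst (prod_decode (f xs)))"
  using computable_case_prod_decode[of "\<lambda>x y. x"] by (simp add: computable_proj prod.case_eq_if)

lemma computable_snd_prod_decode: "computable k f \<Longrightarrow> computable k (\<lambda>xs. snd (prod_decode (f xs)))"
  using computable_case_prod_decode[of "\<lambda>x y. y"] by (simp add: computable_proj prod.case_eq_if)

section \<open>Lists coded by natural numbers\<close>

text \<open>Since \<open>list_encode (x # l) = Suc (prod_encode (x, list_encode l))\<close>, \<open>code_hd\<close> and
  \<open>code_tl\<close> invert \<open>list_encode\<close> on nonempty lists.  Summing up to the code \<open>c\<close> itself
  suffices because a list is shorter than its code.\<close>

definition code_hd :: "nat \<Rightarrow> nat" where
  "code_hd c = fst (prod_decode (c - 1))"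

definition code_tl :: "nat \<Rightarrow> nat" where
  "code_tl c = snd (prod_decode (c - 1))"

definition code_sum :: "(nat \<Rightarrow> nat \<Rightarrow> nat) \<Rightarrow> nat \<Rightarrow> nat" where
  "code_sum f c = (\<Sum>k<c. if (code_tl ^^ k) c = 0 then 0 else f k (code_hd ((code_tl ^^ k) c)))"

lemma funpow_code_tl_list_encode: "(code_tl ^^ k) (list_encode l) = list_encode (drop k l)"
proof (induction k arbitrary: l)
  case (Suc k)
  have "prod_decode 0 = (0, 0)"
    using prod_encode_inverse[of "(0, 0)"] by (simp add: prod_encode_def)
  then have "code_tl (list_encode l) = list_encode (drop 1 l)"
    by (cases l) (auto simp: code_tl_def)
  then show ?case
    using Suc by (simp add: funpow_Suc_right del: funpow.simps)
qed simp

lemma length_le_list_encode: "length l \<le> list_encode l"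
proof (induction l)
  case (Cons x l)
  then show ?case
    using le_prod_encode_2[of "list_encode l" x] by simp
qed simp

lemma code_sum_list_encode: "code_sum f (list_encode l) = (\<Sum>k<length l. f k (l ! k))"
proof -
  have "code_sum f (list_encode l) = (\<Sum>k<list_encode l. if k < length l then f k (l ! k) else 0)"
    unfolding code_sum_def funpow_code_tl_list_encode
    by (intro sum.cong) (auto simp: code_hd_def Cons_nth_drop_Suc[symmetric] list_encode_eq)
  also have "\<dots> = (\<Sum>k<length l. f k (l ! k))"
    using length_le_list_encode[of l] by (intro sum.mono_neutral_cong_right) auto
  finally show ?thesis .
qed

lemma computable_code_sum:
  assumes "computable 2 (\<lambda>ys. f (ys ! 0) (ys ! 1))"
  shows "computable 1 (\<lambda>ys. code_sum f (ys ! 0))"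
proof -
  have tl: "computable 1 (\<lambda>ys. code_tl (ys ! 0))" and hd: "computable 1 (\<lambda>ys. code_hd (ys ! 0))"
    unfolding code_tl_def code_hd_def
    by (intro computable_fst_prod_decode computable_snd_prod_decode computable_diff computable_proj
        computable_const; simp)+
  have drop: "computable (Suc (Suc 0)) (\<lambda>ys. (code_tl ^^ (ys ! 0)) (ys ! 1))"
    by (intro computable_funpow[OF tl] computable_proj) auto
  have "computable (Suc (Suc 0))
      (\<lambda>ys. if (code_tl ^^ (ys ! 0)) (ys ! 1) = 0 then 0
        else f (ys ! 0) (code_hd ((code_tl ^^ (ys ! 0)) (ys ! 1))))"
    by (intro computable_if_eq drop computable_const
        computable_compose2[OF assms] computable_compose1[OF hd] computable_proj) auto
  from computable_sum[OF this computable_proj[of 0 "Suc 0"]] show ?thesis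
    by (simp add: code_sum_def cong: if_cong)
qed

lemma recursive_nat_iff_computable: "recursive_nat f \<longleftrightarrow> computable 1 (\<lambda>ys. f (ys ! 0))"
  unfolding recursive_nat_def computable_def
  by (metis One_nat_def length_Suc_conv length_0_conv nth_Cons_0)

lemma recursive_mapI:
  "computable 1 (\<lambda>ys. g (ys ! 0)) \<Longrightarrow> (\<And>x. g (encA x) = encB (f x)) \<Longrightarrow> recursive_map encA encB f"
  unfolding recursive_map_def recursive_nat_iff_computable by blast

lemma computable_path: "recursive_path \<omega> \<Longrightarrow> computable 1 (\<lambda>ys. enc_bool (\<omega> (ys ! 0)))"
  unfolding recursive_path_def recursive_map_def recursive_nat_iff_computable
  by (auto elim: computable_cong)

lemma code_sum_enc_sit: "code_sum f (enc_sit s) = (\<Sum>k<length s. f k (enc_bool (s ! k)))"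
  by (simp add: enc_sit_def code_sum_list_encode)

lemma enc_rat_fraction:
  assumes "coprime A B" and "0 < B"
  shows "enc_rat (of_nat A / of_nat B) = prod_encode (2 * A, 2 * B)"
proof -
  have "of_nat A / of_nat B = Fract (int A) (int B)"
    by (simp add: Fract_of_int_quotient)
  moreover have "quotient_of (Fract (int A) (int B)) = (int A, int B)"
    using assms by (simp add: quotient_of_Fract normalize_stable)
  ultimately show ?thesis
    by (simp add: enc_rat_def int_encode_def sum_encode_def)
qed

lemma recursive_map_enc_sit_nat:
  assumes "recursive_map enc_sit enc f"
  shows "recursive_map enc_sit_nat enc (\<lambda>(s, n). f s)"
proof -
  obtain g where g: "computable 1 (\<lambda>ys. g (ys ! 0))" and g_enc: "\<And>s. g (enc_sit s) = enc (f s)"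
    using assms unfolding recursive_map_def recursive_nat_iff_computable by blast
  have "computable 1 (\<lambda>ys. g (fst (prod_decode (ys ! 0))))"
    by (rule computable_compose1[OF g computable_fst_prod_decode[OF computable_proj]]) simp
  then show ?thesis
    by (rule recursive_mapI) (simp add: enc_sit_nat_def g_enc split: prod.split)
qed

lemma enc_bool_eq_iff [simp]: "enc_bool x = enc_bool y \<longleftrightarrow> x = y"
  by (simp add: enc_bool_def)

lemma length_prefix [simp]: "length (prefix \<omega> n) = n"
  by (simp add: prefix_def)

section \<open>Selecting the times of one outcome\<close>

lemma sum_if_eq_card:
  fixes n :: nat
  shows "(\<Sum>k<n. if P k then 1 else 0) = card {k. k < n \<and> P k}"
  using sum.inter_filter[OF finite_lessThan[of n], of "\<lambda>_. 1 :: nat" P] by simp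

lemma card_less_tendsto_at_top:
  assumes "infinite {k. P k}"
  shows "filterlim (\<lambda>n. card {k. k < n \<and> P k}) at_top sequentially"
  unfolding filterlim_at_top eventually_sequentially
proof
  fix Z :: nat
  obtain A where A: "A \<subseteq> {k. P k}" "finite A" "card A = Z"
    using infinite_arbitrarily_large[OF assms] by blast
  obtain N where N: "A \<subseteq> {..<N}"
    using finite_nat_bounded[OF A(2)] by blast
  have "Z \<le> card {k. k < n \<and> P k}" if "N \<le> n" for n
  proof -
    have "A \<subseteq> {k. k < n \<and> P k}"
      using A(1) N that by auto
    then show ?thesis
      using A by (metis card_mono finite_Collect_conjI finite_Collect_less_nat)
  qed
  then show "\<exists>N. \<forall>n\<ge>N. Z \<le> card {k. k < n \<and> P k}"
    by blast
qed

lemma limsup_ratio_ge: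
  fixes X :: "nat \<Rightarrow> real" and c :: "nat \<Rightarrow> nat"
  assumes "filterlim c at_top sequentially" and "\<And>n. e * real (c n) \<le> X n"
  shows "ereal e \<le> limsup (\<lambda>n. ereal (X n / real (c n)))"
proof (rule le_Limsup)
  have "eventually (\<lambda>n. 1 \<le> c n) sequentially"
    using assms(1) unfolding filterlim_at_top by blast
  then show "eventually (\<lambda>n. ereal e \<le> ereal (X n / real (c n))) sequentially"
    by eventually_elim (use assms(2) in \<open>simp add: pos_le_divide_eq\<close>)
qed simp

lemma liminf_ratio_le:
  fixes X :: "nat \<Rightarrow> real" and c :: "nat \<Rightarrow> nat"
  assumes "filterlim c at_top sequentially" and "\<And>n. X n \<le> e * real (c n)"
  shows "liminf (\<lambda>n. ereal (X n / real (c n))) \<le> ereal e"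
proof (rule Liminf_le)
  have "eventually (\<lambda>n. 1 \<le> c n) sequentially"
    using assms(1) unfolding filterlim_at_top by blast
  then show "eventually (\<lambda>n. ereal (X n / real (c n)) \<le> ereal e) sequentially"
    by eventually_elim (use assms(2) in \<open>simp add: pos_divide_le_eq\<close>)
qed simp

lemma sel_random_excess_nonpos:
  assumes "sel_random {S} \<phi> \<omega>" and count: "filterlim (sel_count S \<omega>) at_top sequentially"
    and excess: "\<And>k. S (prefix \<omega> k) \<Longrightarrow> e \<le> real (enc_bool (\<omega> k)) - Sup (\<phi> (prefix \<omega> k))"
  shows "e \<le> 0"
proof -
  have "e * real (enc_bool (S (prefix \<omega> k)))
      \<le> real (enc_bool (S (prefix \<omega> k))) * (real (enc_bool (\<omega> k)) - Sup (\<phi> (prefix \<omega> k)))" for k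
    using excess[of k] by (cases "S (prefix \<omega> k)") (simp_all add: enc_bool_def)
  then have "e * real (sel_count S \<omega> n) \<le> (\<Sum>k<n. real (enc_bool (S (prefix \<omega> k)))
      * (real (enc_bool (\<omega> k)) - Sup (\<phi> (prefix \<omega> k))))" (is "_ \<le> ?X n") for n
    unfolding sel_count_def of_nat_sum sum_distrib_left by (intro sum_mono)
  then have "ereal e \<le> limsup (\<lambda>n. ereal (?X n / real (sel_count S \<omega> n)))"
    by (rule limsup_ratio_ge[OF count])
  also have "\<dots> \<le> 0"
    using assms(1) count unfolding sel_random_def by simp
  finally show ?thesis
    by simp
qed

lemma sel_random_deficit_nonpos:
  assumes "sel_random {S} \<phi> \<omega>" and count: "filterlim (sel_count S \<omega>) at_top sequentially"
    and deficit: "\<And>k. S (prefix \<omega> k) \<Longrightarrow> real (enc_bool (\<omega> k)) - Inf (\<phi> (prefix \<omega> k)) \<le> - e"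
  shows "e \<le> 0"
proof -
  have "real (enc_bool (S (prefix \<omega> k))) * (real (enc_bool (\<omega> k)) - Inf (\<phi> (prefix \<omega> k)))
      \<le> - e * real (enc_bool (S (prefix \<omega> k)))" for k
    using deficit[of k] by (cases "S (prefix \<omega> k)") (simp_all add: enc_bool_def)
  then have "(\<Sum>k<n. real (enc_bool (S (prefix \<omega> k))) * (real (enc_bool (\<omega> k)) - Inf (\<phi> (prefix \<omega> k))))
      \<le> - e * real (sel_count S \<omega> n)" (is "?X n \<le> _") for n
    unfolding sel_count_def of_nat_sum sum_distrib_left by (intro sum_mono)
  then have "liminf (\<lambda>n. ereal (?X n / real (sel_count S \<omega> n))) \<le> ereal (- e)"
    by (rule liminf_ratio_le[OF count])
  moreover have "0 \<le> liminf (\<lambda>n. ereal (?X n / real (sel_count S \<omega> n)))"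
    using assms(1) count unfolding sel_random_def by simp
  ultimately have "0 \<le> ereal (- e)"
    by (rule order_trans[rotated])
  then show ?thesis
    by simp
qed

lemma path_value_recursive_temporal_sel:
  assumes "recursive_path \<omega>"
  shows "(\<lambda>s. \<omega> (length s) = v) \<in> recursive_temporal_sel"
  unfolding recursive_temporal_sel_def temporal_def
proof (intro CollectI conjI allI impI recursive_mapI)
  show "computable 1
      (\<lambda>ys. if enc_bool (\<omega> (code_sum (\<lambda>_ _. 1) (ys ! 0))) = enc_bool v then 1 else 0)"
    by (intro computable_if_eq computable_compose1[OF computable_path[OF assms]]
        computable_compose1[OF computable_code_sum] computable_proj computable_const) auto
  show "(if enc_bool (\<omega> (code_sum (\<lambda>_ _. 1) (enc_sit s))) = enc_bool v then 1 else 0)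
      = enc_bool (\<omega> (length s) = v)" for s
    by (simp add: code_sum_enc_sit enc_bool_def)
qed simp

lemma sel_count_path_value_tendsto:
  assumes "infinite {k. \<omega> k = v}"
  shows "filterlim (sel_count (\<lambda>s. \<omega> (length s) = v) \<omega>) at_top sequentially"
proof -
  have "sel_count (\<lambda>s. \<omega> (length s) = v) \<omega> = (\<lambda>n. card {k. k < n \<and> \<omega> k = v})"
    by (rule ext) (simp add: sel_count_def enc_bool_def sum_if_eq_card)
  with card_less_tendsto_at_top[OF assms] show ?thesis
    by simp
qed

lemma sel_random_mono: "SS' \<subseteq> SS \<Longrightarrow> sel_random SS \<phi> \<omega> \<Longrightarrow> sel_random SS' \<phi> \<omega>"
  unfolding sel_random_def by blast

lemma recursive_path_not_sel_random:
  assumes \<omega>: "recursive_path \<omega>" and SS: "recursive_temporal_sel \<subseteq> SS"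
    and \<phi>: "\<And>s. \<phi> s \<noteq> {}" "\<And>s. \<phi> s \<subseteq> {e..1 - e}" and e: "0 < e"
  shows "\<not> sel_random SS \<phi> \<omega>"
proof
  assume "sel_random SS \<phi> \<omega>"
  moreover have "{\<lambda>s. \<omega> (length s) = v} \<subseteq> SS" for v
    using path_value_recursive_temporal_sel[OF \<omega>] SS by blast
  ultimately have random: "sel_random {\<lambda>s. \<omega> (length s) = v} \<phi> \<omega>" for v
    by (blast intro: sel_random_mono)
  have Sup_le: "e \<le> 1 - Sup (\<phi> s)" and Inf_ge: "e \<le> Inf (\<phi> s)" for s
    using \<phi> by (smt (verit) atLeastAtMost_iff cSup_least cInf_greatest subsetD)+
  have "{k. \<omega> k = True} \<union> {k. \<omega> k = False} = UNIV"
    by auto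
  then consider "infinite {k. \<omega> k = True}" | "infinite {k. \<omega> k = False}"
    by (metis finite_UnI infinite_UNIV_nat)
  then show False
  proof cases
    case 1
    have "e \<le> 0"
      by (rule sel_random_excess_nonpos[OF random sel_count_path_value_tendsto[OF 1]])
        (simp add: enc_bool_def Sup_le)
    with e show False
      by simp
  next
    case 2
    have "e \<le> 0"
      by (rule sel_random_deficit_nonpos[OF random sel_count_path_value_tendsto[OF 2]])
        (simp add: enc_bool_def Inf_ge)
    with e show False
      by simp
  qed
qed

section \<open>Betting on the next outcome of a recursive path\<close>

definition agreements :: "(nat \<Rightarrow> bool) \<Rightarrow> bool list \<Rightarrow> nat" where
  "agreements \<omega> s = card {k. k < length s \<and> s ! k = \<omega> k}"

definition path_multiplier :: "(nat \<Rightarrow> bool) \<Rightarrow> nat \<Rightarrow> bool list \<Rightarrow> bool \<Rightarrow> rat" where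
  "path_multiplier \<omega> N s x = of_nat (if x = \<omega> (length s) then N + 1 else 1) / of_nat N"

definition path_capital :: "(nat \<Rightarrow> bool) \<Rightarrow> nat \<Rightarrow> bool list \<Rightarrow> rat" where
  "path_capital \<omega> N s = of_nat ((N + 1) ^ agreements \<omega> s) / of_nat (N ^ length s)"

lemma prod_if_eq_power_card:
  fixes n :: nat
  shows "(\<Prod>k<n. if P k then c else 1) = c ^ card {k. k < n \<and> P k}"
  using prod.inter_filter[OF finite_lessThan[of n], of "\<lambda>_. c" P] by simp

lemma generated_snoc: "generated D (s @ [x]) = generated D s * D s x"
proof -
  have "generated D (s @ [x]) = (\<Prod>k<Suc (length s). D (take k (s @ [x])) ((s @ [x]) ! k))"
    by (simp add: generated_def)
  also have "\<dots> = (\<Prod>k<length s. D (take k s) (s ! k)) * D s x"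
    by (simp add: nth_append)
  finally show ?thesis
    by (simp add: generated_def)
qed

lemma generated_path_multiplier:
  "generated (\<lambda>s x. of_rat (path_multiplier \<omega> N s x)) s = of_rat (path_capital \<omega> N s)"
proof -
  have "generated (\<lambda>s x. of_rat (path_multiplier \<omega> N s x)) s
      = (\<Prod>k<length s. of_nat (if s ! k = \<omega> k then N + 1 else 1) / real N)"
    unfolding generated_def path_multiplier_def
    by (intro prod.cong) (auto simp: of_rat_divide)
  also have "\<dots> = of_nat (\<Prod>k<length s. if s ! k = \<omega> k then N + 1 else 1) / real N ^ length s"
    by (simp add: prod_dividef)
  also have "\<dots> = of_rat (path_capital \<omega> N s)"
    by (simp add: path_capital_def agreements_def prod_if_eq_power_card of_rat_divide of_rat_power
        of_rat_add)
  finally show ?thesis .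
qed

lemma path_capital_prefix: "path_capital \<omega> N (prefix \<omega> n) = (of_nat (N + 1) / of_nat N) ^ n"
proof -
  have "{k. k < n \<and> prefix \<omega> n ! k = \<omega> k} = {..<n}"
    by (auto simp: prefix_def)
  then have "agreements \<omega> (prefix \<omega> n) = n"
    by (simp add: agreements_def)
  then show ?thesis
    by (simp add: path_capital_def power_divide)
qed

lemma ev_path_multiplier:
  assumes "0 < N"
  shows "ev r (\<lambda>x. of_rat (path_multiplier \<omega> N s x)) = (if \<omega> (length s) then r else 1 - r) + 1 / N"
  using assms by (simp add: ev_def path_multiplier_def of_rat_divide field_simps)

lemma supermartingale_path_capital:
  assumes N: "0 < N" and \<phi>: "\<And>s. \<phi> s \<noteq> {}" "\<And>s. \<phi> s \<subseteq> {1 / N..1 - 1 / N}"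
  shows "supermartingale \<phi> (\<lambda>s. of_rat (path_capital \<omega> N s))"
  unfolding supermartingale_def upper_ev_def
proof (intro allI cSup_least)
  fix s y
  let ?D = "\<lambda>s x. real_of_rat (path_multiplier \<omega> N s x)"
  let ?T = "\<lambda>s. real_of_rat (path_capital \<omega> N s)"
  assume "y \<in> (\<lambda>r. ev r (\<lambda>x. ?T (s @ [x]) - ?T s)) ` \<phi> s"
  then obtain r where r: "r \<in> \<phi> s" and y: "y = ev r (\<lambda>x. ?T (s @ [x]) - ?T s)"
    by blast
  have "y = ?T s * (ev r (?D s) - 1)"
    unfolding y generated_path_multiplier[symmetric] generated_snoc
    by (simp add: ev_def algebra_simps)
  moreover have "ev r (?D s) \<le> 1"
    using \<phi>(2)[of s] r N by (auto simp: ev_path_multiplier)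
  moreover have "0 \<le> ?T s"
    by (simp add: path_capital_def)
  ultimately show "y \<le> 0"
    by (simp add: mult_nonneg_nonpos)
qed (use assms in auto)

lemma computable_agreements:
  assumes "recursive_path \<omega>"
  shows "computable 1 (\<lambda>ys. code_sum (\<lambda>k x. if x = enc_bool (\<omega> k) then 1 else 0) (ys ! 0))"
  by (intro computable_code_sum computable_if_eq computable_compose1[OF computable_path[OF assms]]
      computable_proj computable_const) auto

lemma code_sum_agreements:
  "code_sum (\<lambda>k x. if x = enc_bool (\<omega> k) then 1 else 0) (enc_sit s) = agreements \<omega> s"
  by (simp add: code_sum_enc_sit agreements_def sum_if_eq_card)

lemma recursive_path_capital:
  assumes "recursive_path \<omega>" and "0 < N"
  shows "recursive_map enc_sit enc_rat (path_capital \<omega> N)"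
proof -
  let ?agree = "code_sum (\<lambda>k x. if x = enc_bool (\<omega> k) then 1 else 0)"
  have computable: "computable 1
      (\<lambda>ys. prod_encode (2 * (N + 1) ^ ?agree (ys ! 0), 2 * N ^ code_sum (\<lambda>_ _. 1) (ys ! 0)))"
    by (intro computable_prod_encode computable_mult computable_const computable_power
        computable_compose1[OF computable_agreements[OF assms(1)]]
        computable_compose1[OF computable_code_sum] computable_proj) auto
  have "enc_rat (path_capital \<omega> N s) = prod_encode (2 * (N + 1) ^ agreements \<omega> s, 2 * N ^ length s)"
    for s
    unfolding path_capital_def using assms(2) by (intro enc_rat_fraction) simp_all
  then have "prod_encode (2 * (N + 1) ^ ?agree (enc_sit s), 2 * N ^ code_sum (\<lambda>_ _. 1) (enc_sit s))
      = enc_rat (path_capital \<omega> N s)" for s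
    by (simp add: code_sum_agreements code_sum_enc_sit)
  with computable show ?thesis
    by (rule recursive_mapI)
qed

lemma recursive_path_multiplier:
  assumes "recursive_path \<omega>"
  shows "recursive_map enc_sit_bool_nat enc_rat (\<lambda>((s, x), n). path_multiplier \<omega> N s x)"
proof -
  let ?s = "\<lambda>m. fst (prod_decode (fst (prod_decode m)))"
  let ?x = "\<lambda>m. snd (prod_decode (fst (prod_decode m)))"
  let ?g = "\<lambda>m. if ?x m = enc_bool (\<omega> (code_sum (\<lambda>_ _. 1) (?s m)))
      then enc_rat (of_nat (N + 1) / of_nat N) else enc_rat (1 / of_nat N)"
  have computable: "computable 1 (\<lambda>ys. ?g (ys ! 0))"
    by (intro computable_if_eq computable_compose1[OF computable_path[OF assms]]
        computable_compose1[OF computable_code_sum] computable_fst_prod_decode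
        computable_snd_prod_decode computable_proj computable_const) auto
  show ?thesis
    by (rule recursive_mapI[OF computable])
      (auto simp: enc_sit_bool_nat_def code_sum_enc_sit path_multiplier_def split: prod.split)
qed

lemma test_process_path_capital: "test_process (\<lambda>s. of_rat (path_capital \<omega> N s))"
  by (simp add: test_process_def path_capital_def agreements_def)

lemma path_capital_in_F_C:
  assumes "recursive_path \<omega>" and "0 < N"
  shows "(\<lambda>s. of_rat (path_capital \<omega> N s)) \<in> F_C"
  unfolding F_C_def
proof (intro CollectI conjI exI[of _ "path_capital \<omega> N"] allI)
  show "test_process (\<lambda>s. of_rat (path_capital \<omega> N s))"
    by (rule test_process_path_capital)
  show "recursive_map enc_sit enc_rat (path_capital \<omega> N)"
    by (rule recursive_path_capital[OF assms])
  show "0 < path_capital \<omega> N s" for s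
    using assms(2) by (simp add: path_capital_def)
qed simp

lemma path_capital_in_F_ML:
  assumes "recursive_path \<omega>" and "0 < N"
  shows "(\<lambda>s. of_rat (path_capital \<omega> N s)) \<in> F_ML"
  unfolding F_ML_def lower_semicomputable_sit_def
proof (intro CollectI conjI exI[of _ "\<lambda>s n. path_capital \<omega> N s"] allI)
  show "recursive_map enc_sit_nat enc_rat (\<lambda>(s, n). path_capital \<omega> N s)"
    by (rule recursive_map_enc_sit_nat[OF recursive_path_capital[OF assms]])
qed (use test_process_path_capital in auto)

lemma path_capital_in_F_wML:
  assumes "recursive_path \<omega>"
  shows "(\<lambda>s. of_rat (path_capital \<omega> N s)) \<in> F_wML"
  unfolding F_wML_def lower_semicomputable_mult_def
proof (intro CollectI exI conjI allI)
  show "recursive_map enc_sit_bool_nat enc_rat (\<lambda>((s, x), n). path_multiplier \<omega> N s x)"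
    by (rule recursive_path_multiplier[OF assms])
  show "(\<lambda>s. of_rat (path_capital \<omega> N s)) = generated (\<lambda>s x. of_rat (path_multiplier \<omega> N s x))"
    by (simp add: fun_eq_iff generated_path_multiplier)
qed (auto simp: path_multiplier_def)

lemma real_growth_function_real: "real_growth_function real"
  unfolding real_growth_function_def computable_real_fun_def
proof (intro conjI exI[of _ "\<lambda>d n. of_nat d"] allI)
  show "recursive_map enc_nat_nat enc_rat (\<lambda>(d, n). of_nat d)"
  proof (rule recursive_mapI)
    show "computable 1 (\<lambda>ys. prod_encode (2 * fst (prod_decode (ys ! 0)), 2))"
      by (intro computable_prod_encode computable_mult computable_fst_prod_decode computable_proj
          computable_const) simp
    show "prod_encode (2 * fst (prod_decode (enc_nat_nat p)), 2)
        = enc_rat (case p of (d, n) \<Rightarrow> of_nat d)" for p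
      using enc_rat_fraction[of "fst p" 1] by (auto simp: enc_nat_nat_def split: prod.split)
  qed
qed (use reals_Archimedean2 in \<open>auto simp: mono_def\<close>)

lemma limsup_eq_infinity: "filterlim f at_top sequentially \<Longrightarrow> limsup (\<lambda>n. ereal (f n)) = \<infinity>"
  by (simp add: lim_imp_Limsup tendsto_PInfty_eq_at_top)

lemma power_minus_tendsto_at_top: "1 < c \<Longrightarrow> filterlim (\<lambda>n. c ^ n - real n) at_top sequentially"
  by real_asymp

lemma recursive_path_not_martingale_random:
  assumes \<omega>: "recursive_path \<omega>"
    and \<phi>: "\<And>s. \<phi> s \<noteq> {}" "\<And>s. \<phi> s \<subseteq> {e..1 - e}" and e: "0 < e"
  shows "\<not> random_ML \<phi> \<omega>" "\<not> random_wML \<phi> \<omega>" "\<not> random_C \<phi> \<omega>" "\<not> random_S \<phi> \<omega>"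
proof -
  obtain N :: nat where N_gt: "1 / e < N"
    using reals_Archimedean2 by blast
  moreover have "0 < 1 / e"
    using e by simp
  ultimately have N: "0 < N"
    by (metis of_nat_0_less_iff order.strict_trans)
  have "1 / N \<le> e"
    using N_gt e N by (simp add: field_simps)
  define T where "T s = real_of_rat (path_capital \<omega> N s)" for s
  have "supermartingale \<phi> T"
    unfolding T_def using \<phi> \<open>1 / N \<le> e\<close> by (intro supermartingale_path_capital N) force+
  then have T: "T \<in> test_supermartingales F \<phi>" if "F \<in> {F_ML, F_wML, F_C}" for F
    using that path_capital_in_F_ML path_capital_in_F_wML path_capital_in_F_C \<omega> N
      test_process_path_capital unfolding test_supermartingales_def T_def by auto
  have "1 < real (N + 1) / real N"
    using N by simp
  then have growth: "filterlim (\<lambda>n. T (prefix \<omega> n) - real n) at_top sequentially"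
    unfolding T_def path_capital_prefix
    by (simp add: of_rat_divide of_rat_power of_rat_add power_minus_tendsto_at_top)
  then have "limsup (\<lambda>n. ereal (T (prefix \<omega> n))) = \<infinity>"
    by (intro limsup_eq_infinity filterlim_at_top_mono[OF growth]) simp
  with T show "\<not> random_ML \<phi> \<omega>" "\<not> random_wML \<phi> \<omega>" "\<not> random_C \<phi> \<omega>"
    unfolding random_ML_def random_wML_def random_C_def mart_random_def by blast+
  have "0 \<le> limsup (\<lambda>n. ereal (T (prefix \<omega> n) - real n))"
    by (simp add: limsup_eq_infinity[OF growth])
  with T[of F_C] real_growth_function_real show "\<not> random_S \<phi> \<omega>"
    unfolding random_S_def F_S_def by blast
qed

theorem proposition26:
  fixes \<omega> :: "nat \<Rightarrow> bool" and a b :: real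
  assumes "0 < a" and "a \<le> b" and "b < 1"
  shows "(wCH_random (\<lambda>s. {a..b}) \<omega> \<longrightarrow> \<not> recursive_path \<omega>)
    \<and> (\<forall>SS :: (bool list \<Rightarrow> bool) set. countable SS \<and> recursive_temporal_sel \<subseteq> SS
          \<and> sel_random SS (\<lambda>s. {a..b}) \<omega> \<longrightarrow> \<not> recursive_path \<omega>)
    \<and> (random_ML (\<lambda>s. {a..b}) \<omega> \<longrightarrow> \<not> recursive_path \<omega>)
    \<and> (random_wML (\<lambda>s. {a..b}) \<omega> \<longrightarrow> \<not> recursive_path \<omega>)
    \<and> (random_C (\<lambda>s. {a..b}) \<omega> \<longrightarrow> \<not> recursive_path \<omega>)
    \<and> (random_S (\<lambda>s. {a..b}) \<omega> \<longrightarrow> \<not> recursive_path \<omega>)"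
proof -
  define e where "e = min a (1 - b)"
  have e: "0 < e" and interval: "{a..b} \<subseteq> {e..1 - e}" and nonempty: "{a..b} \<noteq> {}"
    using assms by (auto simp: e_def)
  show ?thesis
    using recursive_path_not_sel_random[where \<phi> = "\<lambda>s. {a..b}", OF _ _ nonempty interval e]
      recursive_path_not_martingale_random[where \<phi> = "\<lambda>s. {a..b}", OF _ nonempty interval e]
    unfolding wCH_random_def by blast
qed

end
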